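(* There exists a locally convex topology $\tau$ on the closed unit ball $B_{c_0}$ of $c_0$, containing the weak topology of $B_{c_0}$, such that $B_{c_0}$ is $\tau$-strongly regular for open subsets, while every nonempty $\tau$-open subset of $B_{c_0}$ has (norm) diameter $2$.
   Context: $c_0$ carries its usual sup norm. Locally convex means having a basis of convex open sets. For $O\subset B_{c_0}$, $\tau|_O$ denotes the induced topology. $B_{c_0}$ is $\tau$-strongly regular for open subsets if for every nonempty convex $\tau$-open subset $O$ of $B_{c_0}$ and every $\varepsilon>0$ there is a convex combination (Minkowski sum $\sum_i\lambda_iU_i$, $\lambda_i\ge0$, $\sum\lambda_i=1$) of nonempty $\tau|_O$-open sets $U_i$ with norm diameter less than $\varepsilon$. *)

theory Defs
  imports "HOL-Analysis.Analysis"
begin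

definition c0 :: "(nat \<Rightarrow> real) set" where
  "c0 = {x. x \<longlonglongrightarrow> 0}"

definition c0_norm :: "(nat \<Rightarrow> real) \<Rightarrow> real" where
  "c0_norm x = (SUP n. \<bar>x n\<bar>)"

definition c0_ball :: "(nat \<Rightarrow> real) set" where
  "c0_ball = {x \<in> c0. c0_norm x \<le> 1}"

definition c0_dual :: "((nat \<Rightarrow> real) \<Rightarrow> real) set" where
  "c0_dual = {f. (\<forall>x\<in>c0. \<forall>y\<in>c0. \<forall>a b. f (\<lambda>n. a * x n + b * y n) = a * f x + b * f y)
                 \<and> (\<exists>C. \<forall>x\<in>c0. \<bar>f x\<bar> \<le> C * c0_norm x)}"

definition weak_ball_topology :: "(nat \<Rightarrow> real) topology" where
  "weak_ball_topology = topology_generated_by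
     (insert c0_ball {{x \<in> c0_ball. f x \<in> V} | f V. f \<in> c0_dual \<and> open V})"

definition seq_convex :: "(nat \<Rightarrow> real) set \<Rightarrow> bool" where
  "seq_convex S \<longleftrightarrow> (\<forall>x\<in>S. \<forall>y\<in>S. \<forall>t::real. 0 \<le> t \<and> t \<le> 1 \<longrightarrow>
       (\<lambda>n. (1 - t) * x n + t * y n) \<in> S)"

definition c0_diam :: "(nat \<Rightarrow> real) set \<Rightarrow> real" where
  "c0_diam S = (SUP p\<in>S \<times> S. c0_norm (\<lambda>n. fst p n - snd p n))"

definition locally_convex_top :: "(nat \<Rightarrow> real) topology \<Rightarrow> bool" where
  "locally_convex_top T \<longleftrightarrow> (\<forall>U x. openin T U \<and> x \<in> U \<longrightarrow>
      (\<exists>V. openin T V \<and> seq_convex V \<and> x \<in> V \<and> V \<subseteq> U))"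

definition mink_comb :: "nat \<Rightarrow> (nat \<Rightarrow> real) \<Rightarrow> (nat \<Rightarrow> (nat \<Rightarrow> real) set) \<Rightarrow> (nat \<Rightarrow> real) set" where
  "mink_comb m lam U = {z. \<exists>u. (\<forall>i<m. u i \<in> U i) \<and> z = (\<lambda>k. \<Sum>i<m. lam i * u i k)}"

definition strongly_regular_open :: "(nat \<Rightarrow> real) topology \<Rightarrow> bool" where
  "strongly_regular_open T \<longleftrightarrow>
     (\<forall>W \<epsilon>. openin T W \<and> W \<noteq> {} \<and> seq_convex W \<and> \<epsilon> > 0 \<longrightarrow>
        (\<exists>m lam U. (\<forall>i<m. lam i \<ge> 0) \<and> (\<Sum>i<m. lam i) = 1 \<and>
            (\<forall>i<m. U i \<noteq> {} \<and> openin (subtopology T W) (U i)) \<and>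
            c0_diam (mink_comb m lam U) < \<epsilon>))"

end

(*
  Group the coordinates k >= 1 into blocks {p^2, ..., p^2 + 2p} and let the index p^2 + m
  represent the point m/p - 1 of [-1, 1]. The topology tau on the ball is generated by the
  weakly open slabs {a < f < b} and by "tubes": around a centre c, a tube pins coordinate 0 and
  every coordinate that is not near (within 1/p of) any value within d of c 0, leaving free
  the coordinates near c 0. All these sets are convex.

  Every basic neighbourhood of x leaves free infinitely many coordinates (those representing
  x 0), and dual functionals are small on far unit vectors, so setting one such coordinate to
  1 or to -1 stays inside the neighbourhood: every nonempty open set has diameter 2.

  Conversely, move coordinate 0 of a point x to n values spaced by h and intersect the given
  neighbourhood with the tubes around these n points and with slabs pinning the coordinates
  below M^2, where 2 delta + 2/M < h. A coordinate beyond M^2 lies in a block p >= M, so it is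
  near a value t only if t is within 1/M of the point it represents; hence it is free in at
  most one of the n pieces, and averaging one point of each piece, every coordinate varies by
  at most 2 delta + 2/n.
*)

theory Submission
  imports Defs
begin

lemma bdd_above_abs_c0:
  assumes "x \<in> c0"
  shows "bdd_above (range (\<lambda>n. \<bar>x n\<bar>))"
proof -
  have "Bseq x"
    using assms convergent_imp_Bseq unfolding c0_def convergent_def by blast
  then obtain K where "\<And>n. norm (x n) \<le> K"
    unfolding Bseq_def by auto
  then show ?thesis
    by (auto intro!: bdd_aboveI[where M = K])
qed

lemma abs_le_c0_norm: "x \<in> c0 \<Longrightarrow> \<bar>x n\<bar> \<le> c0_norm x"
  unfolding c0_norm_def by (rule cSUP_upper[OF _ bdd_above_abs_c0]) auto

lemma c0_norm_le: "(\<And>n. \<bar>x n\<bar> \<le> D) \<Longrightarrow> c0_norm x \<le> D"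
  unfolding c0_norm_def by (rule cSUP_least) auto

lemma mem_c0_ball_iff: "x \<in> c0_ball \<longleftrightarrow> x \<in> c0 \<and> (\<forall>n. \<bar>x n\<bar> \<le> 1)"
  unfolding c0_ball_def using abs_le_c0_norm c0_norm_le
  by (metis (mono_tags, lifting) mem_Collect_eq order_trans)

lemma c0_lincomb: "x \<in> c0 \<Longrightarrow> y \<in> c0 \<Longrightarrow> (\<lambda>n. a * x n + b * y n) \<in> c0"
  unfolding c0_def using tendsto_add[OF tendsto_mult_right_zero tendsto_mult_right_zero] by auto

definition unit_vec :: "nat \<Rightarrow> nat \<Rightarrow> real" where
  "unit_vec k = (\<lambda>n. if n = k then 1 else 0)"

lemma unit_vec_in_c0: "unit_vec k \<in> c0"
proof -
  have "\<forall>\<^sub>F n in sequentially. unit_vec k n = 0"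
    unfolding unit_vec_def eventually_sequentially by (rule exI[of _ "Suc k"]) auto
  then show ?thesis
    unfolding c0_def mem_Collect_eq by (rule tendsto_eventually)
qed

lemma sum_scaled_unit_vec:
  assumes "finite S"
  shows "(\<Sum>k\<in>S. a k * unit_vec k n) = (if n \<in> S then a n else 0)"
proof -
  have "\<And>k. a k * unit_vec k n = (if k = n then a k else 0)"
    by (simp add: unit_vec_def)
  then show ?thesis
    using assms by simp
qed

lemma fun_upd_eq_add_unit_vec: "x(k := a) = (\<lambda>n. x n + (a - x k) * unit_vec k n)"
  by (auto simp: unit_vec_def)

lemma fun_upd_in_c0: "x \<in> c0 \<Longrightarrow> x(k := a) \<in> c0"
  unfolding fun_upd_eq_add_unit_vec using c0_lincomb[of x "unit_vec k" 1] unit_vec_in_c0 by simp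

lemma fun_upd_in_c0_ball: "x \<in> c0_ball \<Longrightarrow> \<bar>a\<bar> \<le> 1 \<Longrightarrow> x(k := a) \<in> c0_ball"
  using fun_upd_in_c0 by (simp add: mem_c0_ball_iff)

lemma c0_dual_linear:
  assumes "f \<in> c0_dual" "x \<in> c0" "y \<in> c0"
  shows "f (\<lambda>n. a * x n + b * y n) = a * f x + b * f y"
  using assms unfolding c0_dual_def by blast

lemma c0_dual_fun_upd:
  assumes "f \<in> c0_dual" "x \<in> c0"
  shows "f (x(k := a)) = f x + (a - x k) * f (unit_vec k)"
  unfolding fun_upd_eq_add_unit_vec
  using c0_dual_linear[OF assms unit_vec_in_c0, of 1] by simp

lemma c0_dual_bounded:
  assumes "f \<in> c0_dual"
  obtains C where "C \<ge> 0" "\<And>x. x \<in> c0 \<Longrightarrow> \<bar>f x\<bar> \<le> C * c0_norm x"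
proof -
  obtain C where C: "\<forall>x\<in>c0. \<bar>f x\<bar> \<le> C * c0_norm x"
    using assms unfolding c0_dual_def by blast
  have "\<bar>f x\<bar> \<le> max C 0 * c0_norm x" if "x \<in> c0" for x
  proof -
    have "0 \<le> c0_norm x"
      using abs_le_c0_norm[OF that, of 0] by linarith
    then have "C * c0_norm x \<le> max C 0 * c0_norm x"
      by (intro mult_right_mono) auto
    then show ?thesis
      using C that by force
  qed
  with that[of "max C 0"] show thesis by simp
qed

lemma c0_dual_sum_unit_vec:
  assumes "f \<in> c0_dual" "finite S"
  shows "(\<lambda>n. \<Sum>k\<in>S. a k * unit_vec k n) \<in> c0 \<and>
    f (\<lambda>n. \<Sum>k\<in>S. a k * unit_vec k n) = (\<Sum>k\<in>S. a k * f (unit_vec k))"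
  using assms(2)
proof (induction S rule: finite_induct)
  case empty
  have "f (\<lambda>n. 0 * unit_vec 0 n + 0 * unit_vec 0 n) = 0 * f (unit_vec 0) + 0 * f (unit_vec 0)"
    by (rule c0_dual_linear[OF assms(1) unit_vec_in_c0 unit_vec_in_c0])
  then show ?case unfolding c0_def by simp
next
  case (insert j S)
  let ?v = "\<lambda>n. \<Sum>k\<in>S. a k * unit_vec k n"
  have "(\<lambda>n. \<Sum>k\<in>insert j S. a k * unit_vec k n) = (\<lambda>n. 1 * ?v n + a j * unit_vec j n)"
    using insert by (simp add: add.commute)
  then show ?case
    using insert c0_lincomb[of ?v "unit_vec j" 1 "a j"] unit_vec_in_c0
      c0_dual_linear[OF assms(1), of ?v "unit_vec j" 1 "a j"]
    by (simp add: add.commute)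
qed

lemma c0_dual_unit_vec_tendsto_zero:
  assumes "f \<in> c0_dual"
  shows "(\<lambda>k. f (unit_vec k)) \<longlonglongrightarrow> 0"
proof -
  obtain C where C: "\<And>x. x \<in> c0 \<Longrightarrow> \<bar>f x\<bar> \<le> C * c0_norm x" "C \<ge> 0"
    using c0_dual_bounded[OF assms] by blast
  have "(\<Sum>k<N. \<bar>f (unit_vec k)\<bar>) \<le> C" for N
  proof -
    define v where "v = (\<lambda>n. \<Sum>k<N. sgn (f (unit_vec k)) * unit_vec k n)"
    have v: "v \<in> c0" "f v = (\<Sum>k<N. \<bar>f (unit_vec k)\<bar>)"
      using c0_dual_sum_unit_vec[OF assms, of "{..<N}" "\<lambda>k. sgn (f (unit_vec k))"]
      by (simp_all add: v_def abs_sgn mult.commute)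
    have "c0_norm v \<le> 1"
      by (rule c0_norm_le) (simp add: v_def sum_scaled_unit_vec abs_sgn_eq)
    then show ?thesis
      using C(1)[OF v(1)] C(2) v(2) mult_left_le[of "c0_norm v" C] by linarith
  qed
  then have "summable (\<lambda>k. \<bar>f (unit_vec k)\<bar>)"
    by (intro summableI_nonneg_bounded) auto
  then show ?thesis
    using summable_LIMSEQ_zero tendsto_rabs_zero_iff by blast
qed

lemma coordinate_in_c0_dual: "(\<lambda>z. z k) \<in> c0_dual"
  unfolding c0_dual_def using abs_le_c0_norm by (auto intro!: exI[of _ 1])

text \<open>Index \<open>p\<^sup>2 + m\<close> with \<open>m \<le> 2 * p\<close> represents the point \<open>m / p - 1\<close> of \<open>[-1, 1]\<close>.\<close>

definition near_indices :: "real \<Rightarrow> nat set" where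
  "near_indices t = {p\<^sup>2 + m | p m. 1 \<le> p \<and> m \<le> 2 * p \<and> \<bar>t - (real m / real p - 1)\<bar> < 1 / real p}"

lemma zero_notin_near_indices: "0 \<notin> near_indices t"
  unfolding near_indices_def by auto

lemma near_indices_unbounded:
  assumes "\<bar>t\<bar> \<le> 1"
  shows "\<exists>k\<in>near_indices t. N \<le> k"
proof -
  define p where "p = N + 1"
  define m where "m = nat \<lfloor>(t + 1) * real p\<rfloor>"
  have p: "1 \<le> p" "N \<le> p\<^sup>2"
    unfolding p_def power2_eq_square by simp_all
  have "0 \<le> (t + 1) * real p"
    using assms by simp
  then have m: "real m \<le> (t + 1) * real p" "(t + 1) * real p < real m + 1"
    unfolding m_def by linarith+
  have "(t + 1) * real p \<le> 2 * real p"
    using assms by (intro mult_right_mono) auto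
  then have "m \<le> 2 * p"
    using m(1) by linarith
  moreover have "\<bar>t - (real m / real p - 1)\<bar> < 1 / real p"
  proof -
    have "t - (real m / real p - 1) = ((t + 1) * real p - real m) / real p"
      using p(1) by (simp add: field_simps)
    then show ?thesis
      using m p(1) by (simp add: divide_strict_right_mono)
  qed
  ultimately have "p\<^sup>2 + m \<in> near_indices t"
    unfolding near_indices_def using p(1) by blast
  then show ?thesis
    using p(2) by (intro bexI[of _ "p\<^sup>2 + m"]) auto
qed

lemma square_le_block_iff:
  fixes M p m :: nat
  assumes "m \<le> 2 * p"
  shows "M\<^sup>2 \<le> p\<^sup>2 + m \<longleftrightarrow> M \<le> p"
proof
  assume "M\<^sup>2 \<le> p\<^sup>2 + m"
  moreover have "p\<^sup>2 + m < (p + 1)\<^sup>2"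
    using assms by (simp add: power2_eq_square)
  ultimately have "M\<^sup>2 < (p + 1)\<^sup>2"
    by linarith
  then show "M \<le> p"
    using power_less_imp_less_base by fastforce
next
  assume "M \<le> p"
  then have "M\<^sup>2 \<le> p\<^sup>2"
    by (simp add: power_mono)
  then show "M\<^sup>2 \<le> p\<^sup>2 + m"
    by linarith
qed

lemma near_indices_close:
  assumes "k \<in> near_indices t" "k \<in> near_indices t'" "M\<^sup>2 \<le> k" "0 < M"
  shows "\<bar>t - t'\<bar> < 2 / real M"
proof -
  obtain p m where pm: "k = p\<^sup>2 + m" "1 \<le> p" "m \<le> 2 * p"
      "\<bar>t - (real m / real p - 1)\<bar> < 1 / real p"
    using assms(1) unfolding near_indices_def by blast
  obtain q m' where qm: "k = q\<^sup>2 + m'" "m' \<le> 2 * q"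
      "\<bar>t' - (real m' / real q - 1)\<bar> < 1 / real q"
    using assms(2) unfolding near_indices_def by blast
  have "q \<le> p" "p \<le> q"
    using square_le_block_iff pm qm by (metis order_refl)+
  then have "p = q" "m = m'"
    using pm(1) qm(1) by simp_all
  then have "\<bar>t - t'\<bar> < 2 / real p"
    using pm(4) qm(3) by (simp add: abs_less_iff)
  also have "\<dots> \<le> 2 / real M"
    using square_le_block_iff[OF pm(3), of M] assms(3,4) pm(1)
    by (simp add: frac_le)
  finally show ?thesis .
qed

definition slab :: "((nat \<Rightarrow> real) \<Rightarrow> real) \<Rightarrow> real \<Rightarrow> real \<Rightarrow> (nat \<Rightarrow> real) set" where
  "slab f a b = {z \<in> c0_ball. a < f z \<and> f z < b}"

definition quiet_indices :: "real \<Rightarrow> real \<Rightarrow> nat set" where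
  "quiet_indices t d = {k. \<forall>s. \<bar>s - t\<bar> < d \<longrightarrow> k \<notin> near_indices s}"

definition tube :: "(nat \<Rightarrow> real) \<Rightarrow> real \<Rightarrow> (nat \<Rightarrow> real) set" where
  "tube c d = {z \<in> c0_ball. \<forall>k \<in> quiet_indices (c 0) d. \<bar>z k - c k\<bar> < d}"

definition subbasis :: "(nat \<Rightarrow> real) set set" where
  "subbasis = {slab f a b | f a b. f \<in> c0_dual} \<union> {tube c d | c d. True}"

definition basic_set :: "(nat \<Rightarrow> real) set set \<Rightarrow> (nat \<Rightarrow> real) set" where
  "basic_set F = c0_ball \<inter> \<Inter>F"

definition tau_open :: "(nat \<Rightarrow> real) set \<Rightarrow> bool" where
  "tau_open U \<longleftrightarrow> (\<forall>x\<in>U. \<exists>F. finite F \<and> F \<subseteq> subbasis \<and> x \<in> basic_set F \<and> basic_set F \<subseteq> U)"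

definition tau :: "(nat \<Rightarrow> real) topology" where
  "tau = topology tau_open"

lemma zero_in_quiet_indices: "0 \<in> quiet_indices t d"
  unfolding quiet_indices_def using zero_notin_near_indices by blast

lemma basic_set_Un: "basic_set (F \<union> G) = basic_set F \<inter> basic_set G"
  unfolding basic_set_def by auto

lemma basic_set_subset_c0_ball: "basic_set F \<subseteq> c0_ball"
  unfolding basic_set_def by auto

lemma abs_le_one_if_in_basic_set: "x \<in> basic_set F \<Longrightarrow> \<bar>x k\<bar> \<le> 1"
  by (simp add: basic_set_def mem_c0_ball_iff)

lemma tau_openE:
  assumes "tau_open U" "x \<in> U"
  obtains F where "finite F" "F \<subseteq> subbasis" "x \<in> basic_set F" "basic_set F \<subseteq> U"
  using assms that unfolding tau_open_def by (elim ballE exE conjE) iprover+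

lemma istopology_tau_open: "istopology tau_open"
  unfolding istopology_def
proof (intro conjI allI impI)
  fix S T
  assume S: "tau_open S" and T: "tau_open T"
  show "tau_open (S \<inter> T)"
    unfolding tau_open_def
  proof
    fix x
    assume "x \<in> S \<inter> T"
    then obtain F G where "finite F" "F \<subseteq> subbasis" "x \<in> basic_set F" "basic_set F \<subseteq> S"
        and "finite G" "G \<subseteq> subbasis" "x \<in> basic_set G" "basic_set G \<subseteq> T"
      using tau_openE[OF S] tau_openE[OF T] by (metis IntD1 IntD2)
    then have "finite (F \<union> G) \<and> F \<union> G \<subseteq> subbasis \<and> x \<in> basic_set (F \<union> G) \<and>
        basic_set (F \<union> G) \<subseteq> S \<inter> T"
      unfolding basic_set_Un by auto
    then show "\<exists>H. finite H \<and> H \<subseteq> subbasis \<and> x \<in> basic_set H \<and> basic_set H \<subseteq> S \<inter> T" ..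
  qed
next
  fix K
  assume K: "\<forall>S\<in>K. tau_open S"
  show "tau_open (\<Union>K)"
    unfolding tau_open_def
  proof
    fix x
    assume "x \<in> \<Union>K"
    then obtain S where S: "S \<in> K" "x \<in> S"
      by blast
    then obtain F where "finite F" "F \<subseteq> subbasis" "x \<in> basic_set F" "basic_set F \<subseteq> S"
      using K tau_openE by metis
    then have "finite F \<and> F \<subseteq> subbasis \<and> x \<in> basic_set F \<and> basic_set F \<subseteq> \<Union>K"
      using S(1) by auto
    then show "\<exists>F. finite F \<and> F \<subseteq> subbasis \<and> x \<in> basic_set F \<and> basic_set F \<subseteq> \<Union>K" ..
  qed
qed

lemma openin_tau: "openin tau U \<longleftrightarrow> tau_open U"
  unfolding tau_def using istopology_tau_open by simp

lemma openin_tau_basic_set: "finite F \<Longrightarrow> F \<subseteq> subbasis \<Longrightarrow> openin tau (basic_set F)"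
  unfolding openin_tau tau_open_def by (intro ballI exI[of _ F] conjI) auto

lemma openin_tau_imp_basic_set:
  assumes "openin tau U" "x \<in> U"
  obtains F where "finite F" "F \<subseteq> subbasis" "x \<in> basic_set F" "basic_set F \<subseteq> U"
  by (rule tau_openE[OF assms(1)[unfolded openin_tau] assms(2) that])

lemma openin_tau_subset_c0_ball:
  assumes "openin tau U"
  shows "U \<subseteq> c0_ball"
proof
  fix x
  assume "x \<in> U"
  then obtain F where "x \<in> basic_set F"
    using openin_tau_imp_basic_set[OF assms] by metis
  then show "x \<in> c0_ball"
    using basic_set_subset_c0_ball by blast
qed

lemma topspace_tau: "topspace tau = c0_ball"
proof (rule subset_antisym)
  show "topspace tau \<subseteq> c0_ball"
    by (rule openin_tau_subset_c0_ball[OF openin_topspace])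
  have "openin tau (basic_set {})"
    by (rule openin_tau_basic_set) auto
  then show "c0_ball \<subseteq> topspace tau"
    unfolding basic_set_def by (simp add: openin_subset)
qed

lemma seq_convex_Inter: "(\<And>S. S \<in> F \<Longrightarrow> seq_convex S) \<Longrightarrow> seq_convex (\<Inter>F)"
  unfolding seq_convex_def by blast

lemma convex_combination_mem:
  fixes a b t :: real
  shows "convex V \<Longrightarrow> a \<in> V \<Longrightarrow> b \<in> V \<Longrightarrow> 0 \<le> t \<Longrightarrow> t \<le> 1 \<Longrightarrow> (1 - t) * a + t * b \<in> V"
  unfolding convex_alt by simp

lemma seq_convex_c0_ball: "seq_convex c0_ball"
  unfolding seq_convex_def
proof (intro ballI allI impI)
  fix x y and t :: real
  assume xy: "x \<in> c0_ball" "y \<in> c0_ball" and t: "0 \<le> t \<and> t \<le> 1"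
  have "(1 - t) * x n + t * y n \<in> cball 0 1" for n
    using xy t by (intro convex_combination_mem) (auto simp: mem_c0_ball_iff)
  then show "(\<lambda>n. (1 - t) * x n + t * y n) \<in> c0_ball"
    using xy c0_lincomb by (auto simp: mem_c0_ball_iff)
qed

lemma seq_convex_slab:
  assumes "f \<in> c0_dual"
  shows "seq_convex (slab f a b)"
  unfolding seq_convex_def
proof (intro ballI allI impI)
  fix x y and t :: real
  assume x: "x \<in> slab f a b" and y: "y \<in> slab f a b" and t: "0 \<le> t \<and> t \<le> 1"
  then have "x \<in> c0_ball" "y \<in> c0_ball"
    unfolding slab_def by auto
  then have "(\<lambda>n. (1 - t) * x n + t * y n) \<in> c0_ball"
      and "f (\<lambda>n. (1 - t) * x n + t * y n) = (1 - t) * f x + t * f y"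
    using seq_convex_c0_ball t c0_dual_linear[OF assms]
    unfolding seq_convex_def c0_ball_def by auto
  moreover have "(1 - t) * f x + t * f y \<in> {a<..<b}"
    using x y t by (intro convex_combination_mem) (auto simp: slab_def)
  ultimately show "(\<lambda>n. (1 - t) * x n + t * y n) \<in> slab f a b"
    unfolding slab_def by simp
qed

lemma seq_convex_tube: "seq_convex (tube c d)"
  unfolding seq_convex_def
proof (intro ballI allI impI)
  fix x y and t :: real
  assume x: "x \<in> tube c d" and y: "y \<in> tube c d" and t: "0 \<le> t \<and> t \<le> 1"
  then have "(\<lambda>n. (1 - t) * x n + t * y n) \<in> c0_ball"
    using seq_convex_c0_ball unfolding seq_convex_def tube_def by auto
  moreover have "(1 - t) * x k + t * y k \<in> ball (c k) d" if "k \<in> quiet_indices (c 0) d" for k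
    using x y t that
    by (intro convex_combination_mem) (auto simp: tube_def dist_real_def abs_minus_commute)
  ultimately show "(\<lambda>n. (1 - t) * x n + t * y n) \<in> tube c d"
    unfolding tube_def by (simp add: dist_real_def abs_minus_commute)
qed

lemma seq_convex_basic_set:
  assumes "F \<subseteq> subbasis"
  shows "seq_convex (basic_set F)"
proof -
  have "seq_convex S" if "S \<in> insert c0_ball F" for S
    using that assms seq_convex_c0_ball seq_convex_slab seq_convex_tube
    unfolding subbasis_def by auto
  then show ?thesis
    using seq_convex_Inter[of "insert c0_ball F"] by (simp add: basic_set_def)
qed

lemma locally_convex_tau: "locally_convex_top tau"
  unfolding locally_convex_top_def
proof (intro allI impI)
  fix U x
  assume "openin tau U \<and> x \<in> U"
  then obtain F where "finite F" "F \<subseteq> subbasis" "x \<in> basic_set F" "basic_set F \<subseteq> U"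
    using openin_tau_imp_basic_set by metis
  then show "\<exists>V. openin tau V \<and> seq_convex V \<and> x \<in> V \<and> V \<subseteq> U"
    using openin_tau_basic_set seq_convex_basic_set by metis
qed

lemma openin_tau_weak_subbasic:
  assumes "f \<in> c0_dual" "open V"
  shows "openin tau {x \<in> c0_ball. f x \<in> V}"
  unfolding openin_tau tau_open_def
proof
  fix x
  assume x: "x \<in> {x \<in> c0_ball. f x \<in> V}"
  then obtain e where e: "e > 0" "ball (f x) e \<subseteq> V"
    using \<open>open V\<close> open_contains_ball by blast
  let ?S = "slab f (f x - e) (f x + e)"
  have "{?S} \<subseteq> subbasis"
    unfolding subbasis_def using assms(1) by blast
  moreover have "x \<in> basic_set {?S}" "basic_set {?S} \<subseteq> {x \<in> c0_ball. f x \<in> V}"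
    using x e by (auto simp: basic_set_def slab_def dist_real_def)
  ultimately show "\<exists>F. finite F \<and> F \<subseteq> subbasis \<and> x \<in> basic_set F \<and>
      basic_set F \<subseteq> {x \<in> c0_ball. f x \<in> V}"
    by (intro exI[of _ "{?S}"]) auto
qed

lemma weak_open_imp_tau_open:
  "openin weak_ball_topology U \<Longrightarrow> openin tau U"
  unfolding weak_ball_topology_def openin_topology_generated_by_iff
proof (induction rule: generate_topology_on.induct)
  case Empty
  then show ?case by simp
next
  case (Int a b)
  then show ?case by (simp add: openin_Int)
next
  case (UN K)
  then show ?case by (simp add: openin_Union)
next
  case (Basis s)
  then show ?case
    using openin_tau_weak_subbasic openin_topspace[of tau] topspace_tau by auto
qed

lemma eventually_fun_upd_in_slab:
  assumes "f \<in> c0_dual" "x \<in> slab f lo hi"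
  shows "\<forall>\<^sub>F k in sequentially. \<forall>a. \<bar>a\<bar> \<le> 1 \<longrightarrow> x(k := a) \<in> slab f lo hi"
proof -
  have x: "x \<in> c0_ball" "lo < f x" "f x < hi"
    using assms(2) by (auto simp: slab_def)
  define r where "r = min (f x - lo) (hi - f x) / 2"
  have "r > 0"
    using x(2,3) unfolding r_def by simp
  then have "\<forall>\<^sub>F k in sequentially. \<bar>f (unit_vec k)\<bar> < r"
    using c0_dual_unit_vec_tendsto_zero[OF assms(1)] by (auto simp: tendsto_iff)
  then show ?thesis
  proof (rule eventually_mono, intro impI allI)
    fix k and a :: real
    assume k: "\<bar>f (unit_vec k)\<bar> < r" and a: "\<bar>a\<bar> \<le> 1"
    have "\<bar>x k\<bar> \<le> 1"
      using x(1) by (simp add: mem_c0_ball_iff)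
    then have "\<bar>a - x k\<bar> \<le> 2"
      using a by linarith
    then have "\<bar>a - x k\<bar> * \<bar>f (unit_vec k)\<bar> \<le> 2 * \<bar>f (unit_vec k)\<bar>"
      by (intro mult_right_mono) auto
    then have "\<bar>(a - x k) * f (unit_vec k)\<bar> < 2 * r"
      using k unfolding abs_mult by linarith
    then show "x(k := a) \<in> slab f lo hi"
      using x a fun_upd_in_c0_ball c0_dual_fun_upd[OF assms(1)]
      unfolding slab_def r_def c0_ball_def by auto
  qed
qed

lemma fun_upd_near_in_tube:
  assumes "x \<in> tube c d" "k \<in> near_indices (x 0)" "\<bar>a\<bar> \<le> 1"
  shows "x(k := a) \<in> tube c d"
proof -
  have x: "x \<in> c0_ball" "\<forall>j\<in>quiet_indices (c 0) d. \<bar>x j - c j\<bar> < d"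
    using assms(1) by (auto simp: tube_def)
  then have "\<bar>x 0 - c 0\<bar> < d"
    using zero_in_quiet_indices by blast
  then have "k \<notin> quiet_indices (c 0) d"
    using assms(2) unfolding quiet_indices_def by blast
  then show ?thesis
    using x assms(3) fun_upd_in_c0_ball unfolding tube_def by auto
qed

lemma eventually_fun_upd_near_in_subbasis:
  assumes "G \<in> subbasis" "x \<in> G"
  shows "\<forall>\<^sub>F k in sequentially. k \<in> near_indices (x 0) \<longrightarrow> (\<forall>a. \<bar>a\<bar> \<le> 1 \<longrightarrow> x(k := a) \<in> G)"
proof -
  from assms(1) consider (slab) f lo hi where "G = slab f lo hi" "f \<in> c0_dual"
    | (tube) c d where "G = tube c d"
    unfolding subbasis_def by blast
  then show ?thesis
  proof cases
    case slab
    then show ?thesis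
      using eventually_fun_upd_in_slab[of f x lo hi] assms(2) by (auto elim: eventually_mono)
  next
    case tube
    then show ?thesis
      using fun_upd_near_in_tube assms(2) by (auto intro: always_eventually)
  qed
qed

lemma eventually_fun_upd_zero_in_subbasis:
  assumes "G \<in> subbasis" "x \<in> G"
  shows "\<forall>\<^sub>F a in nhds (x 0). \<bar>a\<bar> \<le> 1 \<longrightarrow> x(0 := a) \<in> G"
proof -
  from assms(1) consider (slab) f lo hi where "G = slab f lo hi" "f \<in> c0_dual"
    | (tube) c d where "G = tube c d"
    unfolding subbasis_def by blast
  then show ?thesis
  proof cases
    case slab
    have x: "x \<in> c0_ball" "f x \<in> {lo<..<hi}"
      using assms(2) slab(1) by (auto simp: slab_def)
    have "((\<lambda>a. f x + (a - x 0) * f (unit_vec 0))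
        \<longlongrightarrow> f x + (x 0 - x 0) * f (unit_vec 0)) (nhds (x 0))"
      by (intro tendsto_intros filterlim_ident)
    then have "\<forall>\<^sub>F a in nhds (x 0). f x + (a - x 0) * f (unit_vec 0) \<in> {lo<..<hi}"
      using x(2) by (intro topological_tendstoD) auto
    then show ?thesis
      by (rule eventually_mono)
        (use x c0_dual_fun_upd[OF slab(2)] fun_upd_in_c0_ball
          in \<open>auto simp: slab(1) slab_def c0_ball_def\<close>)
  next
    case tube
    have x: "x \<in> c0_ball" "\<forall>k\<in>quiet_indices (c 0) d. \<bar>x k - c k\<bar> < d"
      using assms(2) tube by (auto simp: tube_def)
    then have "x 0 \<in> ball (c 0) d"
      using zero_in_quiet_indices by (auto simp: dist_real_def abs_minus_commute)
    then have "\<forall>\<^sub>F a in nhds (x 0). a \<in> ball (c 0) d"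
      by (intro eventually_nhds_in_open) auto
    then show ?thesis
      by (rule eventually_mono)
        (use x fun_upd_in_c0_ball in \<open>auto simp: tube tube_def dist_real_def abs_minus_commute\<close>)
  qed
qed

lemma eventually_fun_upd_near_in_basic_set:
  assumes "finite F" "F \<subseteq> subbasis" "x \<in> basic_set F"
  shows "\<forall>\<^sub>F k in sequentially. k \<in> near_indices (x 0) \<longrightarrow> (\<forall>a. \<bar>a\<bar> \<le> 1 \<longrightarrow> x(k := a) \<in> basic_set F)"
proof -
  have "\<forall>\<^sub>F k in sequentially. \<forall>G\<in>F. k \<in> near_indices (x 0) \<longrightarrow> (\<forall>a. \<bar>a\<bar> \<le> 1 \<longrightarrow> x(k := a) \<in> G)"
    using assms by (intro eventually_ball_finite ballI eventually_fun_upd_near_in_subbasis)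
      (auto simp: basic_set_def)
  then show ?thesis
    by (rule eventually_mono) (use assms(3) fun_upd_in_c0_ball in \<open>auto simp: basic_set_def\<close>)
qed

lemma eventually_fun_upd_zero_in_basic_set:
  assumes "finite F" "F \<subseteq> subbasis" "x \<in> basic_set F"
  shows "\<forall>\<^sub>F a in nhds (x 0). \<bar>a\<bar> \<le> 1 \<longrightarrow> x(0 := a) \<in> basic_set F"
proof -
  have "\<forall>\<^sub>F a in nhds (x 0). \<forall>G\<in>F. \<bar>a\<bar> \<le> 1 \<longrightarrow> x(0 := a) \<in> G"
    using assms by (intro eventually_ball_finite ballI eventually_fun_upd_zero_in_subbasis)
      (auto simp: basic_set_def)
  then show ?thesis
    by (rule eventually_mono) (use assms(3) fun_upd_in_c0_ball in \<open>auto simp: basic_set_def\<close>)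
qed

lemma c0_diam_le:
  assumes "S \<noteq> {}" "\<And>z z'. z \<in> S \<Longrightarrow> z' \<in> S \<Longrightarrow> c0_norm (\<lambda>n. z n - z' n) \<le> D"
  shows "c0_diam S \<le> D"
  unfolding c0_diam_def using assms by (intro cSUP_least) auto

lemma c0_norm_diff_le_2:
  assumes "z \<in> c0_ball" "z' \<in> c0_ball"
  shows "c0_norm (\<lambda>n. z n - z' n) \<le> 2"
proof (rule c0_norm_le)
  fix n
  have "\<bar>z n\<bar> \<le> 1" "\<bar>z' n\<bar> \<le> 1"
    using assms by (auto simp: mem_c0_ball_iff)
  then show "\<bar>z n - z' n\<bar> \<le> 2"
    by linarith
qed

lemma abs_diff_le_c0_diam:
  assumes "S \<subseteq> c0_ball" "z \<in> S" "z' \<in> S"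
  shows "\<bar>z k - z' k\<bar> \<le> c0_diam S"
proof -
  have "(\<lambda>n. z n - z' n) \<in> c0"
    using assms c0_lincomb[of z z' 1 "-1"] by (auto simp: c0_ball_def)
  then have "\<bar>z k - z' k\<bar> \<le> c0_norm (\<lambda>n. z n - z' n)"
    by (rule abs_le_c0_norm)
  also have "\<dots> \<le> c0_diam S"
    unfolding c0_diam_def using assms c0_norm_diff_le_2
    by (intro cSUP_upper2[where x = "(z, z')"] bdd_aboveI[of _ 2]) (auto simp: subset_iff)
  finally show ?thesis .
qed

lemma c0_diam_tau_open:
  assumes "openin tau U" "U \<noteq> {}"
  shows "c0_diam U = 2"
proof -
  obtain x where "x \<in> U"
    using assms(2) by blast
  then obtain F where F: "finite F" "F \<subseteq> subbasis" "x \<in> basic_set F" "basic_set F \<subseteq> U"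
    using openin_tau_imp_basic_set[OF assms(1)] by metis
  obtain N where N: "\<And>k. N \<le> k \<Longrightarrow> k \<in> near_indices (x 0) \<longrightarrow> (\<forall>a. \<bar>a\<bar> \<le> 1 \<longrightarrow> x(k := a) \<in> basic_set F)"
    using eventually_fun_upd_near_in_basic_set[OF F(1-3)] unfolding eventually_sequentially by blast
  obtain k where "k \<in> near_indices (x 0)" "N \<le> k"
    using near_indices_unbounded abs_le_one_if_in_basic_set[OF F(3)] by blast
  then have "x(k := 1) \<in> U" "x(k := -1) \<in> U"
    using N F(4) by auto
  then have "\<bar>(x(k := 1)) k - (x(k := -1)) k\<bar> \<le> c0_diam U"
    using openin_tau_subset_c0_ball[OF assms(1)] by (intro abs_diff_le_c0_diam)
  moreover have "c0_diam U \<le> 2"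
    using assms openin_tau_subset_c0_ball c0_norm_diff_le_2 by (intro c0_diam_le) blast+
  ultimately show ?thesis
    by simp
qed

lemma mem_mink_comb_iff:
  "z \<in> mink_comb m lam U \<longleftrightarrow> (\<exists>u. (\<forall>i<m. u i \<in> U i) \<and> z = (\<lambda>k. \<Sum>i<m. lam i * u i k))"
  unfolding mink_comb_def by (rule mem_Collect_eq)

lemma c0_diam_mink_comb_average_le:
  assumes "0 < n" "\<And>i. i < n \<Longrightarrow> U i \<noteq> {}"
    and osc: "\<And>i u u' k. i < n \<Longrightarrow> u \<in> U i \<Longrightarrow> u' \<in> U i \<Longrightarrow> \<bar>u k - u' k\<bar> \<le> g i k"
    and col: "\<And>k. (\<Sum>i<n. g i k) \<le> C"
  shows "c0_diam (mink_comb n (\<lambda>_. 1 / real n) U) \<le> C / real n"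
proof (rule c0_diam_le)
  let ?u = "\<lambda>i. SOME v. v \<in> U i"
  have "\<forall>i<n. ?u i \<in> U i"
    using assms(2) by (simp add: some_in_eq)
  then have "(\<lambda>k. \<Sum>i<n. 1 / real n * ?u i k) \<in> mink_comb n (\<lambda>_. 1 / real n) U"
    unfolding mem_mink_comb_iff by (intro exI[of _ ?u]) simp
  then show "mink_comb n (\<lambda>_. 1 / real n) U \<noteq> {}"
    by blast
next
  fix z z'
  assume "z \<in> mink_comb n (\<lambda>_. 1 / real n) U" "z' \<in> mink_comb n (\<lambda>_. 1 / real n) U"
  then obtain u u' where u: "\<forall>i<n. u i \<in> U i" "\<forall>i<n. u' i \<in> U i"
    and z: "z = (\<lambda>k. \<Sum>i<n. 1 / real n * u i k)" "z' = (\<lambda>k. \<Sum>i<n. 1 / real n * u' i k)"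
    unfolding mem_mink_comb_iff by metis
  show "c0_norm (\<lambda>k. z k - z' k) \<le> C / real n"
  proof (rule c0_norm_le)
    fix k
    have "\<bar>z k - z' k\<bar> = \<bar>\<Sum>i<n. u i k - u' i k\<bar> / real n"
      unfolding z by (simp add: sum_subtractf flip: sum_divide_distrib diff_divide_distrib)
    also have "\<dots> \<le> (\<Sum>i<n. \<bar>u i k - u' i k\<bar>) / real n"
      by (intro divide_right_mono sum_abs) simp
    also have "\<dots> \<le> (\<Sum>i<n. g i k) / real n"
      using u osc by (intro divide_right_mono sum_mono) auto
    also have "\<dots> \<le> C / real n"
      using col by (intro divide_right_mono) auto
    finally show "\<bar>z k - z' k\<bar> \<le> C / real n" .
  qed
qed

lemma sum_if_le_of_unique:
  fixes c :: real
  assumes "finite A" "0 \<le> c" "\<And>i j. i \<in> A \<Longrightarrow> j \<in> A \<Longrightarrow> P i \<Longrightarrow> P j \<Longrightarrow> i = j"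
  shows "(\<Sum>i\<in>A. if P i then c else 0) \<le> c"
proof -
  have "(\<Sum>i\<in>A. if P i then c else 0) = real (card {i \<in> A. P i}) * c"
    using sum.inter_filter[OF assms(1), of "\<lambda>_. c" P] by simp
  moreover have "card {i \<in> A. P i} \<le> Suc 0"
    using assms(1,3) by (subst card_le_Suc0_iff_eq) auto
  ultimately show ?thesis
    using assms(2) by (simp add: mult_left_le_one_le)
qed

lemma not_quiet_indices_close:
  assumes "k \<notin> quiet_indices t d" "k \<notin> quiet_indices t' d" "M\<^sup>2 \<le> k" "0 < M"
  shows "\<bar>t - t'\<bar> < 2 * d + 2 / real M"
proof -
  obtain s s' where "\<bar>s - t\<bar> < d" "k \<in> near_indices s" "\<bar>s' - t'\<bar> < d" "k \<in> near_indices s'"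
    using assms(1,2) unfolding quiet_indices_def by blast
  moreover from this have "\<bar>s - s'\<bar> < 2 / real M"
    using near_indices_close assms(3,4) by blast
  ultimately show ?thesis
    by (auto simp: abs_less_iff)
qed

definition coord_slabs :: "(nat \<Rightarrow> real) \<Rightarrow> real \<Rightarrow> nat \<Rightarrow> (nat \<Rightarrow> real) set set" where
  "coord_slabs c d N = (\<lambda>k. slab (\<lambda>z. z k) (c k - d) (c k + d)) ` {1..<N}"

lemma finite_coord_slabs: "finite (coord_slabs c d N)"
  unfolding coord_slabs_def by simp

lemma coord_slabs_subset_subbasis: "coord_slabs c d N \<subseteq> subbasis"
  unfolding coord_slabs_def subbasis_def using coordinate_in_c0_dual by blast

lemma center_in_tube_coord_slabs:
  "c \<in> c0_ball \<Longrightarrow> 0 < d \<Longrightarrow> c \<in> tube c d \<inter> \<Inter>(coord_slabs c d N)"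
  unfolding tube_def coord_slabs_def slab_def by auto

lemma abs_diff_le_in_tube_coord_slabs:
  assumes "u \<in> tube c d \<inter> \<Inter>(coord_slabs c d N)" "u' \<in> tube c d \<inter> \<Inter>(coord_slabs c d N)"
  shows "\<bar>u k - u' k\<bar> \<le> 2 * d + (if N \<le> k \<and> k \<notin> quiet_indices (c 0) d then 2 else 0)"
proof -
  have near: "\<bar>u j - c j\<bar> < d \<and> \<bar>u' j - c j\<bar> < d" if "j \<in> quiet_indices (c 0) d \<or> j \<in> {1..<N}" for j
    using assms that unfolding tube_def coord_slabs_def slab_def by (auto simp: abs_diff_less_iff)
  have "0 < d"
    using near[of 0] zero_in_quiet_indices by fastforce
  consider "k \<in> quiet_indices (c 0) d \<or> k \<in> {1..<N}" | "N \<le> k \<and> k \<notin> quiet_indices (c 0) d"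
    using zero_in_quiet_indices by (cases "k = 0") fastforce+
  then show ?thesis
  proof cases
    case 1
    then show ?thesis
      using near[OF 1] by auto
  next
    case 2
    have "\<bar>u k\<bar> \<le> 1" "\<bar>u' k\<bar> \<le> 1"
      using assms unfolding tube_def mem_c0_ball_iff by auto
    then show ?thesis
      using 2 \<open>0 < d\<close> by auto
  qed
qed

lemma exists_separated_points:
  fixes a e :: real and n :: nat
  assumes "\<bar>a\<bar> \<le> 1" "0 < e"
  obtains h t where "0 < h" "\<And>i. i < n \<Longrightarrow> \<bar>t i\<bar> \<le> 1 \<and> \<bar>t i - a\<bar> < e"
    "\<And>i j. i \<noteq> j \<Longrightarrow> h \<le> \<bar>t i - t j\<bar>"
proof -
  define h where "h = min e 1 / (real n + 1)"
  define \<sigma> :: real where "\<sigma> = (if 0 \<le> a then -1 else 1)"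
  define t where "t i = a + \<sigma> * (real i * h)" for i
  have "0 < h"
    unfolding h_def using assms(2) by simp
  moreover have "\<bar>t i\<bar> \<le> 1 \<and> \<bar>t i - a\<bar> < e" if "i < n" for i
  proof -
    have "real i * h < (real n + 1) * h"
      using that \<open>0 < h\<close> by (intro mult_strict_right_mono) auto
    also have "\<dots> = min e 1"
      unfolding h_def by simp
    finally have "real i * h < min e 1" .
    moreover have "0 \<le> real i * h"
      using \<open>0 < h\<close> by simp
    ultimately show ?thesis
      using assms(1) unfolding t_def \<sigma>_def by (auto simp: abs_le_iff)
  qed
  moreover have "h \<le> \<bar>t i - t j\<bar>" if "i \<noteq> j" for i j
  proof -
    have "\<bar>t i - t j\<bar> = \<bar>real i - real j\<bar> * h"
      unfolding t_def \<sigma>_def using \<open>0 < h\<close>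
      by (auto simp: abs_mult abs_minus_commute simp flip: left_diff_distrib)
    moreover have "1 \<le> \<bar>real i - real j\<bar>"
      using that by linarith
    ultimately show ?thesis
      using \<open>0 < h\<close> by (simp add: mult_le_cancel_right1)
  qed
  ultimately show thesis
    using that by blast
qed

lemma exists_tube_parameters:
  fixes a e \<epsilon> :: real
  assumes "\<bar>a\<bar> \<le> 1" "0 < e" "0 < \<epsilon>"
  obtains n M \<delta> t where "0 < n" "0 < M" "0 < \<delta>" "2 * \<delta> + 2 / real n < \<epsilon>"
    "\<And>i. i < n \<Longrightarrow> \<bar>t i\<bar> \<le> 1 \<and> \<bar>t i - a\<bar> < e"
    "\<And>i j. i \<noteq> j \<Longrightarrow> 2 * \<delta> + 2 / real M \<le> \<bar>t i - t j\<bar>"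
proof -
  define n :: nat where "n = nat \<lceil>4 / \<epsilon>\<rceil> + 1"
  have "4 / \<epsilon> < real n" "0 < n"
    unfolding n_def by linarith+
  then have n: "2 / real n < \<epsilon> / 2"
    using assms(3) by (simp add: field_simps)
  obtain h t where "0 < h" and t: "\<And>i. i < n \<Longrightarrow> \<bar>t i\<bar> \<le> 1 \<and> \<bar>t i - a\<bar> < e"
      and sep: "\<And>i j. i \<noteq> j \<Longrightarrow> h \<le> \<bar>t i - t j\<bar>"
    using exists_separated_points[OF assms(1,2)] by metis
  define M :: nat where "M = nat \<lceil>4 / h\<rceil> + 1"
  have "4 / h < real M" "0 < M"
    unfolding M_def by linarith+
  then have M: "2 / real M < h / 2"
    using \<open>0 < h\<close> by (simp add: field_simps)
  define \<delta> where "\<delta> = min (h / 4) (\<epsilon> / 8)"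
  have "0 < \<delta>" "2 * \<delta> + 2 / real M \<le> h" "2 * \<delta> + 2 / real n < \<epsilon>"
    unfolding \<delta>_def using \<open>0 < h\<close> assms(3) M n by auto
  then show thesis
    using that[of n M \<delta> t] \<open>0 < n\<close> \<open>0 < M\<close> t sep by force
qed

lemma c0_diam_mink_comb_tubes_le:
  assumes "0 < n" "0 < M"
    and sep: "\<And>i j. i < n \<Longrightarrow> j < n \<Longrightarrow> i \<noteq> j \<Longrightarrow> 2 * d + 2 / real M \<le> \<bar>c i 0 - c j 0\<bar>"
    and "\<And>i. i < n \<Longrightarrow> U i \<noteq> {}"
    and U: "\<And>i. i < n \<Longrightarrow> U i \<subseteq> tube (c i) d \<inter> \<Inter>(coord_slabs (c i) d (M\<^sup>2))"
  shows "c0_diam (mink_comb n (\<lambda>_. 1 / real n) U) \<le> 2 * d + 2 / real n"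
proof -
  define P where "P i k \<longleftrightarrow> M\<^sup>2 \<le> k \<and> k \<notin> quiet_indices (c i 0) d" for i k
  have "0 < d"
    using assms(1,4) U[of 0] zero_in_quiet_indices unfolding tube_def by fastforce
  have "i = j" if "i < n" "j < n" "P i k" "P j k" for i j k
    using not_quiet_indices_close[of k "c i 0" d "c j 0" M] sep[of i j] that \<open>0 < M\<close>
    unfolding P_def by fastforce
  then have "(\<Sum>i<n. if P i k then 2 else 0) \<le> (2::real)" for k
    by (intro sum_if_le_of_unique) auto
  then have "(\<Sum>i<n. 2 * d + (if P i k then 2 else 0)) \<le> real n * (2 * d) + 2" for k
    by (simp add: sum.distrib)
  then have "c0_diam (mink_comb n (\<lambda>_. 1 / real n) U) \<le> (real n * (2 * d) + 2) / real n"
    using assms(1,4) U abs_diff_le_in_tube_coord_slabs unfolding P_def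
    by (intro c0_diam_mink_comb_average_le[where g = "\<lambda>i k. 2 * d + (if P i k then 2 else 0)"])
      (auto simp: P_def subset_iff)
  also have "\<dots> = 2 * d + 2 / real n"
    using assms(1) by (simp add: field_simps)
  finally show ?thesis .
qed

lemma basic_set_tube_refinements:
  assumes F: "finite F" "F \<subseteq> subbasis" and "0 < n" "0 < M" "0 < \<delta>"
    and c: "\<And>i. i < n \<Longrightarrow> c i \<in> basic_set F"
    and sep: "\<And>i j. i < n \<Longrightarrow> j < n \<Longrightarrow> i \<noteq> j \<Longrightarrow> 2 * \<delta> + 2 / real M \<le> \<bar>c i 0 - c j 0\<bar>"
  defines "U \<equiv> \<lambda>i. basic_set (F \<union> {tube (c i) \<delta>} \<union> coord_slabs (c i) \<delta> (M\<^sup>2))"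
  shows "\<And>i. i < n \<Longrightarrow> c i \<in> U i \<and> openin tau (U i) \<and> U i \<subseteq> basic_set F"
    and "c0_diam (mink_comb n (\<lambda>_. 1 / real n) U) \<le> 2 * \<delta> + 2 / real n"
proof -
  have U_tube: "U i \<subseteq> tube (c i) \<delta> \<inter> \<Inter>(coord_slabs (c i) \<delta> (M\<^sup>2))" for i
    unfolding U_def basic_set_def by auto
  have "c i \<in> tube (c i) \<delta> \<inter> \<Inter>(coord_slabs (c i) \<delta> (M\<^sup>2))" if "i < n" for i
    using c[OF that] basic_set_subset_c0_ball \<open>0 < \<delta>\<close> by (intro center_in_tube_coord_slabs) auto
  then have c_U: "c i \<in> U i" if "i < n" for i
    using c[OF that] that unfolding U_def basic_set_Un by (auto simp: basic_set_def)
  moreover have "openin tau (U i)" for i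
  proof -
    have "tube (c i) \<delta> \<in> subbasis"
      unfolding subbasis_def by blast
    then show ?thesis
      unfolding U_def using F finite_coord_slabs coord_slabs_subset_subbasis
      by (intro openin_tau_basic_set) auto
  qed
  moreover have "U i \<subseteq> basic_set F" for i
    unfolding U_def basic_set_Un by auto
  ultimately show "\<And>i. i < n \<Longrightarrow> c i \<in> U i \<and> openin tau (U i) \<and> U i \<subseteq> basic_set F"
    by blast
  show "c0_diam (mink_comb n (\<lambda>_. 1 / real n) U) \<le> 2 * \<delta> + 2 / real n"
    using c_U by (intro c0_diam_mink_comb_tubes_le[OF \<open>0 < n\<close> \<open>0 < M\<close> sep _ U_tube]) auto
qed

lemma strongly_regular_open_tau: "strongly_regular_open tau"
  unfolding strongly_regular_open_def
proof (intro allI impI)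
  fix W and \<epsilon> :: real
  assume "openin tau W \<and> W \<noteq> {} \<and> seq_convex W \<and> \<epsilon> > 0"
  then have W: "openin tau W" "W \<noteq> {}" and "\<epsilon> > 0"
    by auto
  then obtain x F where F: "finite F" "F \<subseteq> subbasis" "x \<in> basic_set F" "basic_set F \<subseteq> W"
    using openin_tau_imp_basic_set by (metis ex_in_conv)
  obtain e where "e > 0" and e: "\<And>a. \<bar>a - x 0\<bar> < e \<Longrightarrow> \<bar>a\<bar> \<le> 1 \<Longrightarrow> x(0 := a) \<in> basic_set F"
    using eventually_fun_upd_zero_in_basic_set[OF F(1-3)]
    unfolding eventually_nhds_metric dist_real_def by blast
  have "\<bar>x 0\<bar> \<le> 1"
    using F(3) by (rule abs_le_one_if_in_basic_set)
  then obtain n M \<delta> t where "0 < n" "0 < M" "0 < \<delta>" and small: "2 * \<delta> + 2 / real n < \<epsilon>"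
      and t: "\<And>i. i < n \<Longrightarrow> \<bar>t i\<bar> \<le> 1 \<and> \<bar>t i - x 0\<bar> < e"
      and sep: "\<And>i j. i \<noteq> j \<Longrightarrow> 2 * \<delta> + 2 / real M \<le> \<bar>t i - t j\<bar>"
    using exists_tube_parameters[OF _ \<open>e > 0\<close> \<open>\<epsilon> > 0\<close>] by metis
  define U where
    "U i = basic_set (F \<union> {tube (x(0 := t i)) \<delta>} \<union> coord_slabs (x(0 := t i)) \<delta> (M\<^sup>2))" for i
  have U: "\<And>i. i < n \<Longrightarrow> x(0 := t i) \<in> U i \<and> openin tau (U i) \<and> U i \<subseteq> basic_set F"
    and "c0_diam (mink_comb n (\<lambda>_. 1 / real n) U) \<le> 2 * \<delta> + 2 / real n"
    unfolding U_def using F(1,2) \<open>0 < n\<close> \<open>0 < M\<close> \<open>0 < \<delta>\<close> e t sep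
    by (intro basic_set_tube_refinements[where c = "\<lambda>i. x(0 := t i)"]; simp)+
  then have "c0_diam (mink_comb n (\<lambda>_. 1 / real n) U) < \<epsilon>"
    using small by linarith
  moreover have "U i \<noteq> {} \<and> openin (subtopology tau W) (U i)" if "i < n" for i
    using U[OF that] F(4) openin_open_subtopology[OF W(1)] by blast
  ultimately show "\<exists>m lam U. (\<forall>i<m. 0 \<le> lam i) \<and> (\<Sum>i<m. lam i) = 1 \<and>
      (\<forall>i<m. U i \<noteq> {} \<and> openin (subtopology tau W) (U i)) \<and> c0_diam (mink_comb m lam U) < \<epsilon>"
    using \<open>0 < n\<close> by (intro exI[of _ n] exI[of _ "\<lambda>_. 1 / real n"] exI[of _ U]) auto
qed

theorem theorem3p2:
  shows "\<exists>\<tau> :: (nat \<Rightarrow> real) topology.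
           topspace \<tau> = c0_ball \<and>
           locally_convex_top \<tau> \<and>
           (\<forall>U. openin weak_ball_topology U \<longrightarrow> openin \<tau> U) \<and>
           strongly_regular_open \<tau> \<and>
           (\<forall>U. openin \<tau> U \<and> U \<noteq> {} \<longrightarrow> c0_diam U = 2)"
  using topspace_tau locally_convex_tau weak_open_imp_tau_open strongly_regular_open_tau
    c0_diam_tau_open
  by blast

end
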